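(* Let $v,\Omega:[0,\infty)\to\mathbb{R}^3$ be continuous, uniformly bounded signals, and let $(R,x)$ solve $\dot x=Rv$, $\dot R=R\Omega_\times$, with $X=\mathcal{T}(R,x)$. Let $X_e=\mathcal{T}(Q,\xi)$ solve $\dot X_e=X_eU^\vee$ with $U^\vee=\begin{pmatrix}\Omega_\times&v\\0&0\end{pmatrix}$ and arbitrary $X_e(0)\in SE(3)$. Let $X_c=\mathcal{T}(Q_c,\xi_c)\in SE(3)$ be the constant matrix with $X_e(t)=X_cX(t)$ for all $t\ge0$, namely $X_c=X_e(0)X(0)^{-1}$. Let $z_1,\dots,z_n\in\mathbb{R}^3$ be constant landmark positions with $z_i\neq x(t)$ for all $t\ge0$ and all $i$. Define $$z_i^v(t):=\xi(t)+Q(t)R(t)^\top\big(z_i-x(t)\big),$$ $$y_i(t):=R(t)^\top\frac{z_i-x(t)}{|z_i-x(t)|},\qquad y_i^v(t):=Q(t)^\top\frac{z_i^v(t)-\xi(t)}{|z_i^v(t)-\xi(t)|}.$$ Then for every $i\in\{1,\dots,n\}$: 1) $z_i^v(t)=\xi_c+Q_cz_i$ for all $t\ge0$; in particular $z_i^v$ is constant. 2) $y_i^v(t)=y_i(t)$ for all $t\ge0$.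
   Context: For $a\in\mathbb{R}^3$, $a_\times$ denotes the skew-symmetric matrix with $a_\times b=a\times b$. We write $$\mathcal{T}(R,x)=\begin{pmatrix}R&x\\0&1\end{pmatrix}\in SE(3),\qquad R\in SO(3),\ x\in\mathbb{R}^3.$$ $|\cdot|$ is the Euclidean norm. *)

theory Defs
  imports "HOL-Analysis.Analysis" "HOL-Analysis.Cross3"
begin

definition skew :: "real^3 \<Rightarrow> real^3^3" where
  "skew a = matrix (\<lambda>b. cross3 a b)"

definition SO3 :: "(real^3^3) set" where
  "SO3 = {R. orthogonal_matrix R \<and> det R = 1}"

definition unitv :: "real^3 \<Rightarrow> real^3" where
  "unitv w = (1 / norm w) *\<^sub>R w"

end

theory Submission imports Defs begin

text \<open>Since \<open>Q\<close> and \<open>R\<close> solve the same equation \<open>M' = M \<Omega>\<^sub>\<times>\<close> and \<open>\<Omega>\<^sub>\<times>\<close> is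
  skew-symmetric, the derivative of \<open>Q R\<^sup>T\<close> vanishes, so \<open>Q R\<^sup>T = Q\<^sub>c\<close> is constant. Then
  \<open>\<xi> - Q\<^sub>c x\<close> has derivative \<open>Q v - Q\<^sub>c R v = 0\<close> and is constant as well, which gives
  \<open>z\<^sub>i\<^sup>v = \<xi>\<^sub>c + Q\<^sub>c z\<^sub>i\<close>. For the bearings, \<open>z\<^sub>i\<^sup>v - \<xi> = Q\<^sub>c (z\<^sub>i - x)\<close>, the rotation \<open>Q\<^sub>c\<close>
  commutes with normalisation, and \<open>Q\<^sup>T Q\<^sub>c = R\<^sup>T\<close>.\<close>

lemma bounded_bilinear_matrix_matrix_mult:
  "bounded_bilinear ((**) :: real^'n^'m \<Rightarrow> real^'k^'n \<Rightarrow> real^'k^'m)"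
  unfolding bilinear_conv_bounded_bilinear[symmetric] bilinear_def linear_iff
  by (simp add: vec_eq_iff sum.distrib matrix_matrix_mult_def sum_distrib_left algebra_simps)

lemma bounded_bilinear_matrix_vector_mult:
  "bounded_bilinear ((*v) :: real^'n^'m \<Rightarrow> real^'n \<Rightarrow> real^'m)"
  unfolding bilinear_conv_bounded_bilinear[symmetric] bilinear_def linear_iff
  by (simp add: vec_eq_iff matrix_vector_mult_def sum_distrib_left sum.distrib algebra_simps)

lemma bounded_linear_transpose: "bounded_linear (transpose :: real^'n^'m \<Rightarrow> real^'m^'n)"
  unfolding linear_conv_bounded_linear[symmetric] linear_iff
  by (simp add: vec_eq_iff transpose_def)

lemma transpose_skew: "transpose (skew w) = - skew w"
  by (simp add: skew_def matrix_def transpose_def vec_eq_iff forall_3 cross3_simps axis_def)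

lemma norm_orthogonal_matrix_vector:
  fixes M :: "real^'n^'n"
  assumes "orthogonal_matrix M"
  shows "norm (M *v w) = norm w"
  using assms
  by (metis orthogonal_transformation_matrix orthogonal_transformation_norm
      matrix_of_matrix_vector_mul matrix_vector_mul_linear)

lemma unitv_orthogonal_matrix_vector:
  assumes "orthogonal_matrix M"
  shows "unitv (M *v w) = M *v unitv w"
  using norm_orthogonal_matrix_vector[OF assms] by (simp add: unitv_def matrix_vector_mult_scaleR)

lemma constant_on_nonneg_if_zero_vector_derivative:
  assumes "\<And>t. t \<ge> 0 \<Longrightarrow> (f has_vector_derivative 0) (at t within {0..})"
    and "(t::real) \<ge> 0"
  shows "f t = f 0"
proof -
  obtain c where "\<And>s. s \<in> {0..} \<Longrightarrow> f s = c"
    using has_vector_derivative_zero_constant[of "{0::real..}" f] assms(1) by auto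
  then show ?thesis using assms(2) by simp
qed

lemma has_vector_derivative_mult_transpose_skew:
  fixes Q :: "real \<Rightarrow> real^'n^'m" and R :: "real \<Rightarrow> real^'n^'k"
  assumes Q: "(Q has_vector_derivative Q t ** A) (at t within S)"
    and R: "(R has_vector_derivative R t ** A) (at t within S)"
    and skew: "transpose A = - A"
  shows "((\<lambda>t. Q t ** transpose (R t)) has_vector_derivative 0) (at t within S)"
proof -
  have "((\<lambda>t. transpose (R t)) has_vector_derivative transpose (R t ** A)) (at t within S)"
    using bounded_linear.has_vector_derivative[OF bounded_linear_transpose R] .
  from bounded_bilinear.has_vector_derivative[OF bounded_bilinear_matrix_matrix_mult Q this]
  have "((\<lambda>t. Q t ** transpose (R t)) has_vector_derivative
          Q t ** transpose (R t ** A) + (Q t ** A) ** transpose (R t)) (at t within S)" .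
  moreover have "Q t ** transpose (R t ** A) + (Q t ** A) ** transpose (R t) = 0"
    by (simp add: matrix_transpose_mul skew matrix_mul_assoc
        bounded_bilinear.minus_left[OF bounded_bilinear_matrix_matrix_mult]
        bounded_bilinear.minus_right[OF bounded_bilinear_matrix_matrix_mult])
  ultimately show ?thesis by simp
qed

lemma rotation_offset_constant:
  fixes Q R :: "real \<Rightarrow> real^'n^'n"
  assumes "\<And>t. t \<ge> 0 \<Longrightarrow> (Q has_vector_derivative Q t ** A t) (at t within {0..})"
    and "\<And>t. t \<ge> 0 \<Longrightarrow> (R has_vector_derivative R t ** A t) (at t within {0..})"
    and "\<And>t. t \<ge> 0 \<Longrightarrow> transpose (A t) = - A t"
    and "t \<ge> 0"
  shows "Q t ** transpose (R t) = Q 0 ** transpose (R 0)"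
  using assms
  by (intro constant_on_nonneg_if_zero_vector_derivative has_vector_derivative_mult_transpose_skew)

lemma translation_offset_constant:
  fixes Q R :: "real \<Rightarrow> real^'n^'n"
  assumes offset: "\<And>t. t \<ge> 0 \<Longrightarrow> Q t ** transpose (R t) = Qc"
    and R_orth: "\<And>t. t \<ge> 0 \<Longrightarrow> orthogonal_matrix (R t)"
    and x: "\<And>t. t \<ge> 0 \<Longrightarrow> (x has_vector_derivative R t *v v t) (at t within {0..})"
    and \<xi>: "\<And>t. t \<ge> 0 \<Longrightarrow> (\<xi> has_vector_derivative Q t *v v t) (at t within {0..})"
    and "t \<ge> 0"
  shows "\<xi> t - Qc *v x t = \<xi> 0 - Qc *v x 0"
proof (rule constant_on_nonneg_if_zero_vector_derivative[OF _ \<open>t \<ge> 0\<close>])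
  fix s :: real assume s: "s \<ge> 0"
  have "Qc *v (R s *v v s) = Q s *v v s"
    using R_orth[OF s]
    by (simp add: offset[OF s, symmetric] matrix_vector_mul_assoc matrix_mul_assoc[symmetric]
        orthogonal_matrix_def)
  then have "((\<lambda>t. Qc *v x t) has_vector_derivative Q s *v v s) (at s within {0..})"
    using bounded_linear.has_vector_derivative[OF matrix_vector_mul_bounded_linear[of Qc] x[OF s]] by simp
  from has_vector_derivative_diff[OF \<xi>[OF s] this]
  show "((\<lambda>t. \<xi> t - Qc *v x t) has_vector_derivative 0) (at s within {0..})" by simp
qed

theorem lemma2:
  fixes v \<Omega> :: "real \<Rightarrow> real^3"
    and R Q :: "real \<Rightarrow> real^3^3"
    and x \<xi> :: "real \<Rightarrow> real^3"
    and z :: "nat \<Rightarrow> real^3"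
    and n :: nat
  assumes v_cont: "continuous_on {0..} v"
    and Om_cont: "continuous_on {0..} \<Omega>"
    and v_bdd: "\<exists>B. \<forall>t\<ge>0. norm (v t) \<le> B"
    and Om_bdd: "\<exists>B. \<forall>t\<ge>0. norm (\<Omega> t) \<le> B"
    and R_SO3: "\<forall>t\<ge>0. R t \<in> SO3"
    and x_ode: "\<forall>t\<ge>0. (x has_vector_derivative (R t *v v t)) (at t within {0..})"
    and R_ode: "\<forall>t\<ge>0. (R has_vector_derivative (R t ** skew (\<Omega> t))) (at t within {0..})"
    and Q_SO3: "\<forall>t\<ge>0. Q t \<in> SO3"
    and xi_ode: "\<forall>t\<ge>0. (\<xi> has_vector_derivative (Q t *v v t)) (at t within {0..})"
    and Q_ode: "\<forall>t\<ge>0. (Q has_vector_derivative (Q t ** skew (\<Omega> t))) (at t within {0..})"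
    and z_ne: "\<forall>i\<in>{1..n}. \<forall>t\<ge>0. z i \<noteq> x t"
  shows "let Qc = Q 0 ** transpose (R 0);
             \<xi>c = \<xi> 0 - Qc *v x 0;
             zv = (\<lambda>i t. \<xi> t + (Q t ** transpose (R t)) *v (z i - x t));
             y = (\<lambda>i t. transpose (R t) *v unitv (z i - x t));
             yv = (\<lambda>i t. transpose (Q t) *v unitv (zv i t - \<xi> t))
         in \<forall>i\<in>{1..n}. \<forall>t\<ge>0. zv i t = \<xi>c + Qc *v z i \<and> yv i t = y i t"
proof -
  define Qc where "Qc = Q 0 ** transpose (R 0)"
  have orth: "orthogonal_matrix (R t)" "orthogonal_matrix (Q t)" if "t \<ge> 0" for t
    using R_SO3 Q_SO3 that by (auto simp: SO3_def)
  have Qc: "Q t ** transpose (R t) = Qc" if "t \<ge> 0" for t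
    unfolding Qc_def using R_ode Q_ode transpose_skew that by (intro rotation_offset_constant) auto
  have \<xi>c: "\<xi> t - Qc *v x t = \<xi> 0 - Qc *v x 0" if "t \<ge> 0" for t
    using Qc orth x_ode xi_ode that by (intro translation_offset_constant[where Q = Q and R = R and v = v]) auto
  show ?thesis unfolding Let_def Qc_def[symmetric]
  proof (intro ballI allI impI conjI)
    fix i and t :: real assume t: "t \<ge> 0"
    show "\<xi> t + (Q t ** transpose (R t)) *v (z i - x t) = \<xi> 0 - Qc *v x 0 + Qc *v z i"
      using Qc[OF t] \<xi>c[OF t] by (simp add: matrix_vector_right_distrib algebra_simps)
    have Qc_orth: "orthogonal_matrix Qc"
      using Qc[OF t] orth[OF t] by (metis orthogonal_matrix_mul orthogonal_matrix_transpose)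
    have "transpose (Q t) *v (Qc *v w) = transpose (R t) *v w" for w
      using Qc[OF t, symmetric] orth[OF t]
      by (simp add: matrix_vector_mul_assoc matrix_mul_assoc orthogonal_matrix_def
          del: transpose_matrix_vector)
    then show "transpose (Q t) *v unitv (\<xi> t + (Q t ** transpose (R t)) *v (z i - x t) - \<xi> t) =
        transpose (R t) *v unitv (z i - x t)"
      using Qc[OF t]
      by (simp add: unitv_orthogonal_matrix_vector[OF Qc_orth] del: transpose_matrix_vector)
  qed
qed

end
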